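(* For every integer $d \ge 2$, there exists a monoid $H$ in $\mathcal{C}_d$ having full system of sets of lengths, i.e. $\mathcal{L}(H) = \mathbb{P}_{\mathrm{fin}}$.
   Context: Monoids are commutative, cancellative, reduced. $\mathcal{C}_d$ is the collection of all rank-$d$ submonoids of free commutative monoids of finite rank (rank = rank of the Grothendieck group). For an atomic monoid $H$ and $x\in H$, $\mathsf{L}(x)$ is the set of all $n$ such that $x$ is a sum of $n$ atoms; $\mathcal{L}(H)=\{\mathsf{L}(x)\mid x\in H\}$. $\mathbb{P}_{\mathrm{fin}} := \{\{0\},\{1\}\} \cup \{S \subset \mathbb{Z}_{\ge 2} \mid S \text{ finite}\}$. *)

theory Defs
  imports Main
begin

text \<open>Elements of the free commutative monoid of rank n are modelled as functions
  nat => nat vanishing outside {..<n}; addition is pointwise.\<close>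

definition free_elems :: "nat \<Rightarrow> (nat \<Rightarrow> nat) set" where
  "free_elems n = {x. \<forall>i\<ge>n. x i = 0}"

definition vzero :: "nat \<Rightarrow> nat" where
  "vzero = (\<lambda>i. 0)"

definition vadd :: "(nat \<Rightarrow> nat) \<Rightarrow> (nat \<Rightarrow> nat) \<Rightarrow> (nat \<Rightarrow> nat)" where
  "vadd x y = (\<lambda>i. x i + y i)"

definition vsum :: "(nat \<Rightarrow> nat) list \<Rightarrow> (nat \<Rightarrow> nat)" where
  "vsum us = (\<lambda>i. sum_list (map (\<lambda>u. u i) us))"

definition submonoid_free :: "nat \<Rightarrow> (nat \<Rightarrow> nat) set \<Rightarrow> bool" where
  "submonoid_free n H \<longleftrightarrow> H \<subseteq> free_elems n \<and> vzero \<in> H \<and>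
     (\<forall>x\<in>H. \<forall>y\<in>H. vadd x y \<in> H)"

definition int_lin_indep :: "(nat \<Rightarrow> nat) set \<Rightarrow> bool" where
  "int_lin_indep S \<longleftrightarrow> finite S \<and>
     (\<forall>c :: (nat \<Rightarrow> nat) \<Rightarrow> int.
        (\<forall>i. (\<Sum>v\<in>S. c v * int (v i)) = 0) \<longrightarrow> (\<forall>v\<in>S. c v = 0))"

text \<open>The rank of the Grothendieck group of H (the subgroup of Z^n generated by H)
  equals d: the maximal number of Z-linearly independent elements of H is d.\<close>
definition has_rank :: "(nat \<Rightarrow> nat) set \<Rightarrow> nat \<Rightarrow> bool" where
  "has_rank H d \<longleftrightarrow> (\<exists>S\<subseteq>H. int_lin_indep S \<and> card S = d) \<and>
     (\<forall>S\<subseteq>H. int_lin_indep S \<longrightarrow> card S \<le> d)"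

definition atoms :: "(nat \<Rightarrow> nat) set \<Rightarrow> (nat \<Rightarrow> nat) set" where
  "atoms H = {u \<in> H. u \<noteq> vzero \<and> (\<forall>a\<in>H. \<forall>b\<in>H. u = vadd a b \<longrightarrow> a = vzero \<or> b = vzero)}"

definition lengths :: "(nat \<Rightarrow> nat) set \<Rightarrow> (nat \<Rightarrow> nat) \<Rightarrow> nat set" where
  "lengths H x = {k. \<exists>us. length us = k \<and> set us \<subseteq> atoms H \<and> vsum us = x}"

definition system_of_lengths :: "(nat \<Rightarrow> nat) set \<Rightarrow> nat set set" where
  "system_of_lengths H = lengths H ` H"

definition P_fin :: "nat set set" where
  "P_fin = {{0}, {1}} \<union> {S. S \<subseteq> {2..} \<and> finite S \<and> S \<noteq> {}}"

end

theory Submission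
  imports Defs "HOL-Library.Product_Plus" "HOL-Library.Countable_Set"
begin

text \<open>
  Enumerate the sets of \<open>P_fin\<close> with minimum at least 2 as \<open>S\<^sub>0, S\<^sub>1, \<dots>\<close>.
  For \<open>S \<subseteq> {2..M}\<close> and a base \<open>B\<close> that is large compared to \<open>M\<close>, consider the numbers
  with base-\<open>B\<close> digits \<open>(1, 0, 0)\<close>, \<open>(1, M+1+s, 0)\<close> and \<open>(M+1-s, 2(M+1)-s, 1)\<close> for
  \<open>s \<in> S\<close>. Sums of at most \<open>M\<close> of them do not carry, so everything can be read off
  digitwise: the last digit forces every factorization of \<open>(M, 3(M+1), 1)\<close> to contain
  exactly one generator of the third kind, whose leading digit \<open>M+1-s\<close> then forces the
  length \<open>s\<close>; the middle digit makes all generators atoms.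

  Block \<open>c\<close> realises \<open>S\<^sub>c\<close> in this way and is placed on the ray of slope \<open>c\<close> in \<open>\<nat>\<^sup>2\<close>.
  The bases grow so fast that every element of a later block is larger than the target of an
  earlier one, while the generators of earlier blocks have smaller slope; hence factorizations
  of elements of block \<open>c\<close> only use generators of block \<open>c\<close>. The monoid generated by all
  blocks, times \<open>\<nat>\<^sup>d\<^sup>-\<^sup>2\<close>, has rank \<open>d\<close> and realises every set of \<open>P_fin\<close>.
\<close>

lemma fst_sum_list: "fst (sum_list xs) = sum_list (map fst xs)"
  by (induction xs) simp_all

lemma snd_sum_list: "snd (sum_list xs) = sum_list (map snd xs)"
  by (induction xs) simp_all

lemma sum_list_le_length_mult:
  fixes f :: "'a \<Rightarrow> nat"
  assumes "\<forall>x\<in>set xs. f x \<le> c"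
  shows "sum_list (map f xs) \<le> length xs * c"
  using assms by (induction xs) auto

lemma length_mult_le_sum_list:
  fixes f :: "'a \<Rightarrow> nat"
  assumes "\<forall>x\<in>set xs. c \<le> f x"
  shows "length xs * c \<le> sum_list (map f xs)"
  using assms by (induction xs) auto

lemma sum_list_mono_inv:
  fixes f g :: "'a \<Rightarrow> nat"
  assumes "\<forall>x\<in>set xs. f x \<le> g x" "sum_list (map f xs) = sum_list (map g xs)"
  shows "\<forall>x\<in>set xs. f x = g x"
  using assms
proof (induction xs)
  case (Cons y ys)
  have "sum_list (map f ys) \<le> sum_list (map g ys)"
    using Cons.prems(1) by (intro sum_list_mono) simp
  with Cons.prems have "f y = g y" "sum_list (map f ys) = sum_list (map g ys)" by auto
  with Cons show ?case by simp
qed simp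

section \<open>Factorizations in submonoids of free monoids\<close>

lemma vsum_Nil [simp]: "vsum [] = vzero"
  by (simp add: vsum_def vzero_def)

lemma vsum_Cons [simp]: "vsum (u # us) = vadd u (vsum us)"
  by (simp add: vsum_def vadd_def)

lemma vsum_append [simp]: "vsum (us @ vs) = vadd (vsum us) (vsum vs)"
  by (simp add: vsum_def vadd_def)

lemma vadd_vzero [simp]: "vadd u vzero = u"
  by (simp add: vadd_def vzero_def)

lemma vsum_eq_vzero_iff: "vsum us = vzero \<longleftrightarrow> (\<forall>u\<in>set us. u = vzero)"
  by (induction us) (auto simp: vadd_def vzero_def fun_eq_iff)

lemma vsum_mem:
  assumes "submonoid_free n H" "set us \<subseteq> H"
  shows "vsum us \<in> H"
  using assms(2) by (induction us) (use assms(1) in \<open>auto simp: submonoid_free_def\<close>)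

lemma atoms_subset: "atoms H \<subseteq> H - {vzero}"
  by (auto simp: atoms_def)

lemma length_vsum_eq_atom:
  assumes "submonoid_free n H" "x \<in> atoms H" "set us \<subseteq> H - {vzero}" "vsum us = x"
  shows "length us = 1"
proof (cases us)
  case Nil
  then show ?thesis using assms(2,4) by (auto simp: atoms_def)
next
  case (Cons u rest)
  have "rest = []"
  proof (rule ccontr)
    assume "rest \<noteq> []"
    then have "vsum rest \<noteq> vzero" using assms(3) Cons by (auto simp: vsum_eq_vzero_iff neq_Nil_conv)
    moreover have "vsum rest \<in> H" using vsum_mem[OF assms(1)] assms(3) Cons by auto
    moreover have "u \<in> H - {vzero}" using assms(3) Cons by auto
    ultimately show False using assms(2,4) Cons by (auto simp: atoms_def)
  qed
  then show ?thesis using Cons by simp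
qed

definition weight :: "nat \<Rightarrow> (nat \<Rightarrow> nat) \<Rightarrow> nat" where
  "weight n x = (\<Sum>i<n. x i)"

lemma weight_vadd: "weight n (vadd x y) = weight n x + weight n y"
  by (simp add: weight_def vadd_def sum.distrib)

lemma weight_pos: "x \<in> free_elems n \<Longrightarrow> x \<noteq> vzero \<Longrightarrow> 0 < weight n x"
  by (fastforce simp: weight_def free_elems_def vzero_def fun_eq_iff not_le)

lemma length_le_weight:
  assumes "submonoid_free n H" "set us \<subseteq> atoms H"
  shows "length us \<le> weight n (vsum us)"
  using assms(2)
proof (induction us)
  case (Cons u us)
  have "u \<in> free_elems n" "u \<noteq> vzero"
    using Cons.prems assms(1) by (auto simp: atoms_def submonoid_free_def)
  then show ?case using Cons weight_pos[of u n] by (simp add: weight_vadd)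
qed simp

lemma exists_factorization:
  assumes "submonoid_free n H" "x \<in> H"
  shows "\<exists>us. set us \<subseteq> atoms H \<and> vsum us = x"
  using assms(2)
proof (induction "weight n x" arbitrary: x rule: less_induct)
  case less
  show ?case
  proof (cases "x = vzero \<or> x \<in> atoms H")
    case True
    then show ?thesis by (auto intro: exI[of _ "[]"] exI[of _ "[x]"])
  next
    case False
    then obtain a b where ab: "a \<in> H - {vzero}" "b \<in> H - {vzero}" "x = vadd a b"
      using less.prems unfolding atoms_def by blast
    then have "a \<in> free_elems n" "b \<in> free_elems n"
      using assms(1) by (auto simp: submonoid_free_def)
    then have "weight n a < weight n x" "weight n b < weight n x"
      using ab weight_pos by (auto simp: weight_vadd)
    then obtain as bs where "set as \<subseteq> atoms H" "vsum as = a" "set bs \<subseteq> atoms H" "vsum bs = b"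
      using less.hyps ab by (metis DiffD1)
    then show ?thesis using ab by (intro exI[of _ "as @ bs"]) simp
  qed
qed

lemma lengths_vzero: "lengths H vzero = {0}"
proof -
  have "us = []" if "set us \<subseteq> atoms H" "vsum us = vzero" for us
    using that atoms_subset[of H] unfolding vsum_eq_vzero_iff by (cases us) auto
  moreover have "vsum [] = vzero" by simp
  ultimately show ?thesis unfolding lengths_def by fastforce
qed

lemma lengths_atom:
  assumes "submonoid_free n H" "x \<in> atoms H"
  shows "lengths H x = {1}"
proof -
  have "length us = 1" if "set us \<subseteq> atoms H" "vsum us = x" for us
    using length_vsum_eq_atom[OF assms] that atoms_subset by blast
  moreover have "vsum [x] = x" by simp
  ultimately show ?thesis using assms(2) unfolding lengths_def by (fastforce intro: exI[of _ "[x]"])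
qed

definition P_fin_ge2 :: "nat set set" where
  "P_fin_ge2 = {S. S \<subseteq> {2..} \<and> finite S \<and> S \<noteq> {}}"

lemma P_fin_split: "P_fin = {{0}, {1}} \<union> P_fin_ge2"
  by (simp add: P_fin_def P_fin_ge2_def)

lemma lengths_in_P_fin_ge2:
  assumes H: "submonoid_free n H" and x: "x \<in> H - {vzero}" "x \<notin> atoms H"
  shows "lengths H x \<in> P_fin_ge2"
proof -
  have "lengths H x \<subseteq> {..weight n x}"
    using length_le_weight[OF H] by (auto simp: lengths_def)
  moreover have "lengths H x \<noteq> {}"
    using exists_factorization[OF H] x by (fastforce simp: lengths_def)
  moreover have "lengths H x \<subseteq> {2..}"
  proof
    fix k assume "k \<in> lengths H x"
    then obtain us where "length us = k" "set us \<subseteq> atoms H" "vsum us = x"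
      by (auto simp: lengths_def)
    with x have "k \<noteq> 0" "k \<noteq> 1" by (auto simp: length_Suc_conv)
    then show "k \<in> {2..}" by simp
  qed
  ultimately show ?thesis unfolding P_fin_ge2_def using finite_subset by blast
qed

lemma system_of_lengths_subset_P_fin:
  assumes "submonoid_free n H"
  shows "system_of_lengths H \<subseteq> P_fin"
proof
  fix L assume "L \<in> system_of_lengths H"
  then obtain x where "x \<in> H" "L = lengths H x" by (auto simp: system_of_lengths_def)
  then show "L \<in> P_fin"
    using lengths_vzero lengths_atom[OF assms] lengths_in_P_fin_ge2[OF assms]
    unfolding P_fin_split by blast
qed

section \<open>Integer linear independence\<close>

lemma exists_int_relation:
  fixes f :: "'a \<Rightarrow> nat \<Rightarrow> int"
  assumes "finite I" "n < card I" "\<forall>j\<in>I. \<forall>i\<ge>n. f j i = 0"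
  shows "\<exists>c. (\<forall>i. (\<Sum>j\<in>I. c j * f j i) = 0) \<and> (\<exists>j\<in>I. c j \<noteq> 0)"
  using assms
proof (induction n arbitrary: I f)
  case 0
  then obtain j0 where "j0 \<in> I" by fastforce
  with "0.prems" show ?case by (intro exI[of _ "\<lambda>j. if j = j0 then 1 else 0"]) auto
next
  case (Suc n)
  show ?case
  proof (cases "\<forall>j\<in>I. f j n = 0")
    case True
    then have "\<forall>j\<in>I. \<forall>i\<ge>n. f j i = 0"
      using Suc.prems(3) by (metis Suc_leI le_neq_implies_less)
    then show ?thesis using Suc.IH Suc.prems(1,2) by simp
  next
    case False
    then obtain k where k: "k \<in> I" "f k n \<noteq> 0" by blast
    define g where "g j i = f k n * f j i - f j n * f k i" for j i
    \<comment> \<open>Gaussian elimination of coordinate n with pivot k.\<close>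
    have "g j i = 0" if "j \<in> I" "n \<le> i" for j i
      using Suc.prems(3) that k(1) by (cases "i = n") (auto simp: g_def)
    then have "\<forall>j\<in>I - {k}. \<forall>i\<ge>n. g j i = 0" by blast
    moreover have "n < card (I - {k})" using Suc.prems(1,2) k(1) by simp
    ultimately obtain c' where c': "\<forall>i. (\<Sum>j\<in>I - {k}. c' j * g j i) = 0" "\<exists>j\<in>I - {k}. c' j \<noteq> 0"
      using Suc.IH[of "I - {k}" g] Suc.prems(1) by auto
    define c where "c j = (if j = k then - (\<Sum>j\<in>I - {k}. c' j * f j n) else f k n * c' j)" for j
    have "(\<Sum>j\<in>I. c j * f j i) = (\<Sum>j\<in>I - {k}. c' j * g j i)" for i
    proof -
      have "(\<Sum>j\<in>I. c j * f j i) = c k * f k i + (\<Sum>j\<in>I - {k}. f k n * c' j * f j i)"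
        using Suc.prems(1) k(1) by (simp add: sum.remove c_def)
      also have "\<dots> = (\<Sum>j\<in>I - {k}. f k n * c' j * f j i) - (\<Sum>j\<in>I - {k}. c' j * f j n * f k i)"
        by (simp add: c_def sum_distrib_right)
      also have "\<dots> = (\<Sum>j\<in>I - {k}. c' j * g j i)"
        by (simp add: g_def right_diff_distrib sum_subtractf ac_simps)
      finally show ?thesis .
    qed
    moreover have "\<exists>j\<in>I. c j \<noteq> 0" using c'(2) k(2) by (auto simp: c_def)
    ultimately show ?thesis using c'(1) by auto
  qed
qed

lemma card_le_if_int_lin_indep:
  assumes "S \<subseteq> free_elems n" "int_lin_indep S"
  shows "card S \<le> n"
proof (rule ccontr)
  assume "\<not> card S \<le> n"
  moreover have "finite S" using assms(2) by (simp add: int_lin_indep_def)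
  moreover have "\<forall>v\<in>S. \<forall>i\<ge>n. int (v i) = 0" using assms(1) by (auto simp: free_elems_def)
  ultimately obtain c where "\<forall>i. (\<Sum>v\<in>S. c v * int (v i)) = 0" "\<exists>v\<in>S. c v \<noteq> 0"
    using exists_int_relation[of S n "\<lambda>v i. int (v i)"] by auto
  then show False using assms(2) by (auto simp: int_lin_indep_def)
qed

lemma int_lin_indep_empty: "int_lin_indep {}"
  by (simp add: int_lin_indep_def)

lemma int_lin_indep_insert_pivot:
  assumes S: "int_lin_indep S" and pivot: "v i \<noteq> 0" "\<forall>w\<in>S. w i = 0"
  shows "int_lin_indep (insert v S)" and "v \<notin> S"
proof -
  show vS: "v \<notin> S" using pivot by auto
  have fin: "finite S" using S by (simp add: int_lin_indep_def)
  show "int_lin_indep (insert v S)"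
    unfolding int_lin_indep_def
  proof (intro conjI allI impI)
    fix c :: "(nat \<Rightarrow> nat) \<Rightarrow> int"
    assume rel: "\<forall>l. (\<Sum>w\<in>insert v S. c w * int (w l)) = 0"
    then have rel': "c v * int (v l) + (\<Sum>w\<in>S. c w * int (w l)) = 0" for l
      using fin vS by simp
    have "(\<Sum>w\<in>S. c w * int (w i)) = 0" using pivot(2) by (intro sum.neutral) simp
    then have "c v = 0" using rel'[of i] pivot(1) by simp
    then have "\<forall>l. (\<Sum>w\<in>S. c w * int (w l)) = 0" using rel' by simp
    then have "\<forall>w\<in>S. c w = 0" using S by (simp add: int_lin_indep_def)
    with \<open>c v = 0\<close> show "\<forall>w\<in>insert v S. c w = 0" by simp
  qed (use fin in simp)
qed

definition unit_vec :: "nat \<Rightarrow> nat \<Rightarrow> nat" where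
  "unit_vec i = (\<lambda>j. if j = i then 1 else 0)"

lemma inj_unit_vec: "inj unit_vec"
  by (rule injI) (metis unit_vec_def zero_neq_one)

lemma int_lin_indep_unit_vecs: "finite I \<Longrightarrow> int_lin_indep (unit_vec ` I)"
proof (induction I rule: finite_induct)
  case (insert i I)
  have "\<forall>w\<in>unit_vec ` I. w i = 0" "unit_vec i i \<noteq> 0"
    using insert.hyps(2) by (auto simp: unit_vec_def)
  then show ?case using int_lin_indep_insert_pivot(1) insert.IH by simp
qed (simp add: int_lin_indep_empty)

section \<open>One block: a length set realised by base-\<open>B\<close> digits\<close>

type_synonym digits = "nat \<times> nat \<times> nat"

definition digit_val :: "nat \<Rightarrow> digits \<Rightarrow> nat" where
  "digit_val B v = fst v * B * B + fst (snd v) * B + snd (snd v)"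

definition plain_gens :: "nat \<Rightarrow> nat set \<Rightarrow> digits set" where
  "plain_gens M S = insert (1, 0, 0) ((\<lambda>s. (1, M + 1 + s, 0)) ` S)"

definition marked_gen :: "nat \<Rightarrow> nat \<Rightarrow> digits" where
  "marked_gen M s = (M + 1 - s, 2 * (M + 1) - s, 1)"

definition digit_gens :: "nat \<Rightarrow> nat set \<Rightarrow> digits set" where
  "digit_gens M S = plain_gens M S \<union> marked_gen M ` S"

definition digit_target :: "nat \<Rightarrow> digits" where
  "digit_target M = (M, 3 * (M + 1), 1)"

lemma sum_list_plain_gens:
  assumes "S \<subseteq> {2..}" "set rs \<subseteq> plain_gens M S"
  shows "fst (sum_list rs) = length rs" "snd (snd (sum_list rs)) = 0"
    "fst (snd (sum_list rs)) = 0 \<or> M + 3 \<le> fst (snd (sum_list rs))"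
  using assms(2) by (induction rs) (use assms(1) in \<open>auto simp: plain_gens_def\<close>)

lemma sum_list_digit_gens_cases:
  assumes "set ts \<subseteq> digit_gens M S" "snd (snd (sum_list ts)) \<le> 1"
  shows "set ts \<subseteq> plain_gens M S \<or>
    (\<exists>s\<in>S. \<exists>rs. set rs \<subseteq> plain_gens M S \<and> length ts = Suc (length rs) \<and>
       sum_list ts = marked_gen M s + sum_list rs)"
  using assms
proof (induction ts)
  case (Cons t ts)
  show ?case
  proof (cases "t \<in> plain_gens M S")
    case True
    then have "snd (snd t) = 0" by (auto simp: plain_gens_def)
    then have "snd (snd (sum_list ts)) \<le> 1" using Cons.prems(2) by simp
    then consider "set ts \<subseteq> plain_gens M S"
      | s rs where "s \<in> S" "set rs \<subseteq> plain_gens M S" "length ts = Suc (length rs)"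
          "sum_list ts = marked_gen M s + sum_list rs"
      using Cons.IH Cons.prems(1) by force
    then show ?thesis
    proof cases
      case (2 s rs)
      then show ?thesis using True
        by (intro disjI2 bexI[of _ s] exI[of _ "t # rs"]) (auto simp: ac_simps)
    qed (use True in simp)
  next
    case False
    then obtain s where s: "s \<in> S" "t = marked_gen M s"
      using Cons.prems(1) by (auto simp: digit_gens_def)
    then have "snd (snd (sum_list ts)) = 0" using Cons.prems(2) by (simp add: marked_gen_def)
    then have "set ts \<subseteq> plain_gens M S"
      using Cons.IH Cons.prems(1) by (auto simp: marked_gen_def)
    with s show ?thesis by auto
  qed
qed simp

lemma length_factorization_digit_target:
  assumes S: "S \<subseteq> {2..M}" and ts: "set ts \<subseteq> digit_gens M S" "sum_list ts = digit_target M"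
  shows "length ts \<in> S"
proof -
  have "snd (snd (sum_list ts)) = 1" using ts(2) by (simp add: digit_target_def)
  moreover have S2: "S \<subseteq> {2..}" using S by auto
  ultimately obtain s rs where s: "s \<in> S" "set rs \<subseteq> plain_gens M S" "length ts = Suc (length rs)"
      "sum_list ts = marked_gen M s + sum_list rs"
    using sum_list_digit_gens_cases[OF ts(1)] sum_list_plain_gens(2) by force
  then have "fst (digit_target M) = fst (marked_gen M s) + length rs"
    using ts(2) sum_list_plain_gens(1)[OF S2] by simp
  moreover have "2 \<le> s" "s \<le> M" using s(1) S by auto
  ultimately have "length ts = s" using s(3) by (simp add: digit_target_def marked_gen_def)
  with s show ?thesis by simp
qed

lemma length_factorization_digit_gen:
  assumes S: "S \<subseteq> {2..M}" and ts: "set ts \<subseteq> digit_gens M S" "sum_list ts \<in> digit_gens M S"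
  shows "length ts = 1"
proof -
  have S2: "S \<subseteq> {2..}" using S by auto
  show ?thesis
  proof (cases "sum_list ts \<in> plain_gens M S")
    case True
    then have "snd (snd (sum_list ts)) = 0" "fst (sum_list ts) = 1" by (auto simp: plain_gens_def)
    moreover have "sum_list ts \<noteq> marked_gen M s + sum_list rs" for s rs
      using \<open>snd (snd (sum_list ts)) = 0\<close> by (auto simp: marked_gen_def)
    ultimately have "set ts \<subseteq> plain_gens M S"
      using sum_list_digit_gens_cases[OF ts(1)] by auto
    then show ?thesis using sum_list_plain_gens(1)[OF S2] \<open>fst (sum_list ts) = 1\<close> by simp
  next
    case False
    then obtain s where s: "s \<in> S" "sum_list ts = marked_gen M s"
      using ts(2) by (auto simp: digit_gens_def)
    have "\<not> set ts \<subseteq> plain_gens M S"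
    proof
      assume "set ts \<subseteq> plain_gens M S"
      from sum_list_plain_gens(2)[OF S2 this] s(2) show False by (simp add: marked_gen_def)
    qed
    then obtain s' rs where s': "s' \<in> S" "set rs \<subseteq> plain_gens M S" "length ts = Suc (length rs)"
        and eq: "marked_gen M s = marked_gen M s' + sum_list rs"
      using sum_list_digit_gens_cases[OF ts(1)] s by (auto simp: marked_gen_def)
    have bounds: "2 \<le> s" "s \<le> M" "2 \<le> s'" "s' \<le> M" using s(1) s'(1) S by auto
    have "2 * (M + 1) - s = 2 * (M + 1) - s' + fst (snd (sum_list rs))"
      using arg_cong[OF eq, of "\<lambda>v. fst (snd v)"] by (simp add: marked_gen_def)
    then have "fst (snd (sum_list rs)) = 0" "s' = s"
      using sum_list_plain_gens(3)[OF S2 s'(2)] bounds by auto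
    moreover have "M + 1 - s = M + 1 - s' + length rs"
      using arg_cong[OF eq, of fst] sum_list_plain_gens(1)[OF S2 s'(2)] by (simp add: marked_gen_def)
    ultimately show ?thesis using s'(3) by simp
  qed
qed

lemma sum_list_replicate_hi: "sum_list (replicate n (a, 0, 0)) = (n * a, 0, 0 :: nat)"
  by (induction n) (simp_all add: zero_prod_def)

lemma exists_factorization_digit_target:
  assumes S: "S \<subseteq> {2..M}" and s: "s \<in> S"
  shows "\<exists>ts. set ts \<subseteq> digit_gens M S \<and> sum_list ts = digit_target M \<and> length ts = s"
proof -
  have s_bounds: "2 \<le> s" "s \<le> M" using S s by auto
  define ts where "ts = marked_gen M s # (1, M + 1 + s, 0) # replicate (s - 2) (1, 0, 0)"
  have "set ts \<subseteq> digit_gens M S" using s by (auto simp: ts_def digit_gens_def plain_gens_def)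
  moreover have "sum_list ts = digit_target M"
    using s_bounds by (simp add: ts_def sum_list_replicate_hi marked_gen_def digit_target_def)
  moreover have "length ts = s" using s_bounds by (simp add: ts_def)
  ultimately show ?thesis by blast
qed

lemma digit_val_add: "digit_val B (x + y) = digit_val B x + digit_val B y"
  by (simp add: digit_val_def algebra_simps)

lemma digit_val_sum_list: "digit_val B (sum_list ts) = sum_list (map (digit_val B) ts)"
  by (induction ts) (simp_all add: digit_val_add, simp add: digit_val_def)

lemma digit_val_inj:
  assumes "fst (snd x) < B" "snd (snd x) < B" "fst (snd y) < B" "snd (snd y) < B"
    and "digit_val B x = digit_val B y"
  shows "x = y"
proof -
  have split: "a * B + z = a' * B + z' \<Longrightarrow> z < B \<Longrightarrow> z' < B \<Longrightarrow> a = a' \<and> z = z'" for a z a' z'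
    by (metis add.commute div_mult_self1 div_less less_zeroE mod_mult_self1 mod_less add_0)
  have "(fst x * B + fst (snd x)) * B + snd (snd x) = (fst y * B + fst (snd y)) * B + snd (snd y)"
    using assms(5) by (simp add: digit_val_def algebra_simps)
  then show ?thesis using assms(1-4) split by (metis prod_eq_iff)
qed

lemma digit_gens_bounds:
  assumes "S \<subseteq> {2..M}" "t \<in> digit_gens M S"
  shows "1 \<le> fst t" "fst (snd t) \<le> 2 * (M + 1)" "snd (snd t) \<le> 1"
  using assms by (auto simp: digit_gens_def plain_gens_def marked_gen_def subset_iff)

lemma digit_val_ge:
  assumes "1 \<le> fst t"
  shows "B * B \<le> digit_val B t"
proof -
  have "B * B \<le> fst t * B * B" using assms by simp
  then show ?thesis unfolding digit_val_def by linarith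
qed

lemma digit_val_mono:
  assumes "fst v \<le> fst w" "fst (snd v) \<le> fst (snd w)" "snd (snd v) \<le> snd (snd w)"
  shows "digit_val B v \<le> digit_val B w"
  using assms by (simp add: digit_val_def add_mono mult_le_mono1)

lemma digits_le_target:
  assumes "S \<subseteq> {2..M}" "2 \<le> M" "v \<in> insert (digit_target M) (digit_gens M S)"
  shows "fst v \<le> M" "fst (snd v) \<le> 3 * (M + 1)" "snd (snd v) \<le> 1"
  using assms by (auto simp: digit_target_def digit_gens_def plain_gens_def marked_gen_def subset_iff)

lemma digit_val_le_target:
  assumes "S \<subseteq> {2..M}" "2 \<le> M" "v \<in> insert (digit_target M) (digit_gens M S)"
  shows "digit_val B v \<le> digit_val B (digit_target M)"
  using digits_le_target[OF assms] by (intro digit_val_mono) (simp_all add: digit_target_def)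

lemma large_base_bounds:
  assumes "4 * (M + 1)\<^sup>2 \<le> B"
  shows "M * (2 * (M + 1)) < B" "3 * (M + 1) < B" "digit_val B (digit_target M) < (M + 1) * (B * B)"
proof -
  have "M * (2 * (M + 1)) < 4 * (M + 1) * (M + 1)" "4 * (M + 1) \<le> 4 * (M + 1) * (M + 1)"
    by (auto simp: algebra_simps)
  then show "M * (2 * (M + 1)) < B" and B: "3 * (M + 1) < B"
    using assms by (simp_all add: power2_eq_square)
  have "(3 * (M + 1) + 1) * B \<le> B * B" using B by (intro mult_le_mono1) simp
  then show "digit_val B (digit_target M) < (M + 1) * (B * B)"
    using B by (simp add: digit_val_def digit_target_def algebra_simps)
qed

lemma sum_list_eq_if_digit_val_eq:
  assumes S: "S \<subseteq> {2..M}" "2 \<le> M" and B: "4 * (M + 1)\<^sup>2 \<le> B"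
    and ts: "set ts \<subseteq> digit_gens M S" and v: "v \<in> insert (digit_target M) (digit_gens M S)"
    and val: "sum_list (map (digit_val B) ts) = digit_val B v"
  shows "sum_list ts = v"
proof -
  note gen_bounds = digit_gens_bounds[OF S(1)]
  have "length ts * (B * B) \<le> sum_list (map (digit_val B) ts)"
    using ts gen_bounds(1) by (intro length_mult_le_sum_list) (blast intro: digit_val_ge)
  also have "\<dots> < (M + 1) * (B * B)"
    using val digit_val_le_target[OF S v, of B] large_base_bounds(3)[OF B] by simp
  finally have len: "length ts \<le> M" by (simp only: mult_less_cancel2) simp
  have "fst (snd (sum_list ts)) = sum_list (map (\<lambda>t. fst (snd t)) ts)"
    by (simp add: fst_sum_list snd_sum_list o_def)
  also have "\<dots> \<le> length ts * (2 * (M + 1))"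
    using ts gen_bounds(2) by (intro sum_list_le_length_mult) blast
  also have "\<dots> \<le> M * (2 * (M + 1))" using len by (rule mult_le_mono1)
  finally have mid: "fst (snd (sum_list ts)) < B" using large_base_bounds(1)[OF B] by simp
  have "snd (snd (sum_list ts)) = sum_list (map (\<lambda>t. snd (snd t)) ts)"
    by (simp add: snd_sum_list o_def)
  also have "\<dots> \<le> length ts * 1"
    using ts gen_bounds(3) by (intro sum_list_le_length_mult) blast
  finally have "snd (snd (sum_list ts)) \<le> length ts * 1" .
  then have lo: "snd (snd (sum_list ts)) < B" using len large_base_bounds(2)[OF B] by simp
  have "fst (snd v) < B" "snd (snd v) < B"
    using digits_le_target[OF S v] large_base_bounds(2)[OF B] by simp_all
  with mid lo val show ?thesis by (intro digit_val_inj[of _ B]) (simp_all add: digit_val_sum_list)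
qed

section \<open>Gluing the blocks\<close>

lemma countable_P_fin_ge2: "countable P_fin_ge2"
  by (rule countable_subset[OF _ countable_Collect_finite]) (auto simp: P_fin_ge2_def)

lemma P_fin_ge2_nonempty: "P_fin_ge2 \<noteq> {}"
  by (auto simp: P_fin_ge2_def intro!: exI[of _ "{2}"])

definition block_set :: "nat \<Rightarrow> nat set" where
  "block_set = from_nat_into P_fin_ge2"

definition block_max :: "nat \<Rightarrow> nat" where
  "block_max c = Max (block_set c)"

primrec block_base :: "nat \<Rightarrow> nat" where
  "block_base 0 = 4 * (block_max 0 + 1)\<^sup>2"
| "block_base (Suc c) =
    4 * (block_max (Suc c) + 1)\<^sup>2 + digit_val (block_base c) (digit_target (block_max c))"

definition block_gens :: "nat \<Rightarrow> digits set" where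
  "block_gens c = digit_gens (block_max c) (block_set c)"

definition block_target :: "nat \<Rightarrow> digits" where
  "block_target c = digit_target (block_max c)"

definition block_vec :: "nat \<Rightarrow> digits \<Rightarrow> nat \<Rightarrow> nat" where
  "block_vec c t = (\<lambda>i. if i = 0 then digit_val (block_base c) t
                        else if i = 1 then c * digit_val (block_base c) t else 0)"

definition block_vecs :: "(nat \<Rightarrow> nat) set" where
  "block_vecs = {block_vec c t | c t. t \<in> block_gens c}"

definition full_monoid :: "nat \<Rightarrow> (nat \<Rightarrow> nat) set" where
  "full_monoid d = {x \<in> free_elems d. \<exists>us. set us \<subseteq> block_vecs \<and> x 0 = vsum us 0 \<and> x 1 = vsum us 1}"

lemma range_block_set: "range block_set = P_fin_ge2"
  by (simp add: block_set_def countable_P_fin_ge2 P_fin_ge2_nonempty)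

lemma block_params:
  "block_set c \<subseteq> {2..block_max c}" "2 \<le> block_max c" "4 * (block_max c + 1)\<^sup>2 \<le> block_base c"
proof -
  have S: "block_set c \<in> P_fin_ge2" using range_block_set by blast
  then show "block_set c \<subseteq> {2..block_max c}"
    by (auto simp: P_fin_ge2_def block_max_def)
  from S obtain s where "s \<in> block_set c" "2 \<le> s" by (auto simp: P_fin_ge2_def)
  with S show "2 \<le> block_max c" by (auto simp: P_fin_ge2_def block_max_def intro: le_trans[OF _ Max_ge])
  show "4 * (block_max c + 1)\<^sup>2 \<le> block_base c" by (cases c) simp_all
qed

lemma block_base_pos: "0 < block_base c"
proof -
  have "0 < 4 * (block_max c + 1)\<^sup>2" by simp
  then show ?thesis using block_params(3)[of c] by (rule less_le_trans)
qed

lemma block_target_lt_base_Suc: "digit_val (block_base c) (block_target c) < block_base (Suc c)"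
  using block_params(3)[of "Suc c"] by (simp add: block_target_def)

lemma strict_mono_block_base: "strict_mono block_base"
  unfolding strict_mono_Suc_iff
proof
  fix c
  have "block_base c \<le> block_base c * block_base c" using block_base_pos[of c] by simp
  also have "\<dots> \<le> digit_val (block_base c) (block_target c)"
    using block_params(2)[of c] by (intro digit_val_ge) (simp add: block_target_def digit_target_def)
  finally show "block_base c < block_base (Suc c)" using block_target_lt_base_Suc by (rule le_less_trans)
qed

lemma block_target_lt_later_blocks:
  assumes "c < c'"
  shows "digit_val (block_base c) (block_target c) < block_base c' * block_base c'"
proof -
  have "block_base (Suc c) \<le> block_base c'"
    using assms by (simp add: strict_mono_less_eq[OF strict_mono_block_base] del: block_base.simps)
  also have "\<dots> \<le> block_base c' * block_base c'" using block_base_pos[of c'] by simp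
  finally show ?thesis by (rule less_le_trans[OF block_target_lt_base_Suc])
qed

lemma block_vec_0_bounds:
  assumes "t \<in> block_gens c"
  shows "block_base c * block_base c \<le> block_vec c t 0" "0 < block_vec c t 0"
proof -
  show ge: "block_base c * block_base c \<le> block_vec c t 0"
    using digit_gens_bounds(1)[OF block_params(1)] assms
    by (simp add: block_vec_def block_gens_def digit_val_ge)
  show "0 < block_vec c t 0" using mult_pos_pos[OF block_base_pos[of c] block_base_pos[of c]] ge by linarith
qed

lemma vsum_map_block_vec: "vsum (map (block_vec c) ts) = block_vec c (sum_list ts)"
  by (induction ts)
    (auto simp: vadd_def vzero_def block_vec_def digit_val_add digit_val_def algebra_simps fun_eq_iff)

lemma block_vec_high: "2 \<le> i \<Longrightarrow> block_vec c t i = 0"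
  by (simp add: block_vec_def)

lemma block_vecs_slope:
  assumes ws: "set ws \<subseteq> block_vecs" and sum: "vsum ws = block_vec c v"
    and v: "v \<in> insert (block_target c) (block_gens c)"
  shows "set ws \<subseteq> block_vec c ` block_gens c"
proof -
  define N where "N = digit_val (block_base c) v"
  have N_small: "N < block_base c' * block_base c'" if "c < c'" for c'
    using digit_val_le_target[OF block_params(1,2) v[unfolded block_target_def block_gens_def],
        of "block_base c"] block_target_lt_later_blocks[OF that]
    unfolding N_def block_target_def by (rule le_less_trans)
  have coords: "sum_list (map (\<lambda>w. w 0) ws) = N" "sum_list (map (\<lambda>w. w 1) ws) = c * N"
    using fun_cong[OF sum, of 0] fun_cong[OF sum, of 1] by (simp_all add: vsum_def block_vec_def N_def)
  have slope_le: "\<forall>w\<in>set ws. w 1 \<le> c * w 0"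
  proof
    fix w assume w: "w \<in> set ws"
    then obtain c' t where t: "w = block_vec c' t" "t \<in> block_gens c'"
      using ws by (auto simp: block_vecs_def)
    have "w 0 \<le> N" using w coords(1) member_le_sum_list[of "w 0" "map (\<lambda>w. w 0) ws"] by simp
    then have "c' \<le> c" using N_small block_vec_0_bounds(1)[OF t(2)] t(1) by (meson leD le_less_trans not_le)
    then show "w 1 \<le> c * w 0" using t(1) by (simp add: block_vec_def)
  qed
  have "sum_list (map (\<lambda>w. c * w 0) ws) = c * N"
    using coords(1) by (simp add: sum_list_const_mult)
  then have slope_eq: "\<forall>w\<in>set ws. w 1 = c * w 0"
    using sum_list_mono_inv[OF slope_le] coords(2) by simp
  show ?thesis
  proof
    fix w assume w: "w \<in> set ws"
    then obtain c' t where t: "w = block_vec c' t" "t \<in> block_gens c'"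
      using ws by (auto simp: block_vecs_def)
    have "w 1 = c' * w 0" using t(1) by (simp add: block_vec_def)
    then have "c' * w 0 = c * w 0" using slope_eq w by simp
    then have "c' = c" using block_vec_0_bounds(2)[OF t(2)] t(1) by simp
    with t show "w \<in> block_vec c ` block_gens c" by simp
  qed
qed

lemma block_factorization:
  assumes "set ws \<subseteq> block_vecs" and sum: "vsum ws = block_vec c v"
    and v: "v \<in> insert (block_target c) (block_gens c)"
  obtains ts where "ws = map (block_vec c) ts" "set ts \<subseteq> block_gens c" "sum_list ts = v"
proof -
  obtain ts where ts: "ws = map (block_vec c) ts" "set ts \<subseteq> block_gens c"
    using block_vecs_slope[OF assms] lists_image[of "block_vec c" "block_gens c"] by blast
  then have "sum_list (map (digit_val (block_base c)) ts) = digit_val (block_base c) v"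
    using fun_cong[OF sum, of 0] vsum_map_block_vec
    by (simp add: block_vec_def digit_val_sum_list)
  then have "sum_list ts = v"
    using sum_list_eq_if_digit_val_eq[OF block_params] ts(2) v
    by (simp add: block_gens_def block_target_def)
  with ts that show ?thesis by blast
qed

lemma block_vecs_high: "w \<in> block_vecs \<Longrightarrow> 2 \<le> i \<Longrightarrow> w i = 0"
  by (auto simp: block_vecs_def block_vec_high)

lemma vsum_block_vecs_high: "set us \<subseteq> block_vecs \<Longrightarrow> 2 \<le> i \<Longrightarrow> vsum us i = 0"
  by (induction us) (simp_all add: block_vecs_high vadd_def vzero_def)

lemma submonoid_full_monoid: "submonoid_free d (full_monoid d)"
  unfolding submonoid_free_def
proof (intro conjI ballI)
  show "full_monoid d \<subseteq> free_elems d" by (auto simp: full_monoid_def)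
  show "vzero \<in> full_monoid d"
    by (auto simp: full_monoid_def free_elems_def vzero_def intro!: exI[of _ "[]"])
  fix x y assume "x \<in> full_monoid d" "y \<in> full_monoid d"
  then obtain us vs where x: "x \<in> free_elems d" "set us \<subseteq> block_vecs" "x 0 = vsum us 0" "x 1 = vsum us 1"
    and y: "y \<in> free_elems d" "set vs \<subseteq> block_vecs" "y 0 = vsum vs 0" "y 1 = vsum vs 1"
    unfolding full_monoid_def by blast
  have "vadd x y \<in> free_elems d" using x(1) y(1) by (simp add: free_elems_def vadd_def)
  moreover have "set (us @ vs) \<subseteq> block_vecs" using x(2) y(2) by simp
  moreover have "vadd x y 0 = vsum (us @ vs) 0" "vadd x y 1 = vsum (us @ vs) 1"
    using x(3,4) y(3,4) by (simp_all add: vadd_def)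
  ultimately show "vadd x y \<in> full_monoid d" unfolding full_monoid_def by blast
qed

lemma block_vecs_subset_full_monoid:
  assumes "2 \<le> d"
  shows "block_vecs \<subseteq> full_monoid d"
proof
  fix w assume w: "w \<in> block_vecs"
  then have "w \<in> free_elems d" using assms by (auto simp: block_vecs_def free_elems_def block_vec_high)
  moreover have "set [w] \<subseteq> block_vecs" "w 0 = vsum [w] 0" "w 1 = vsum [w] 1"
    using w by simp_all
  ultimately show "w \<in> full_monoid d" unfolding full_monoid_def by blast
qed

lemma block_vecs_nonzero: "vzero \<notin> block_vecs"
proof
  assume "vzero \<in> block_vecs"
  then obtain c t where "vzero = block_vec c t" "t \<in> block_gens c" by (auto simp: block_vecs_def)
  with block_vec_0_bounds(2)[of t c] show False by (simp add: vzero_def)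
qed

lemma full_monoid_low_elem:
  assumes "x \<in> full_monoid d" "\<forall>i\<ge>2. x i = 0"
  obtains us where "set us \<subseteq> block_vecs" "vsum us = x"
proof -
  obtain us where us: "set us \<subseteq> block_vecs" "x 0 = vsum us 0" "x 1 = vsum us 1"
    using assms(1) by (auto simp: full_monoid_def)
  have "x i = vsum us i" for i
  proof (cases "2 \<le> i")
    case True
    then show ?thesis using assms(2) vsum_block_vecs_high[OF us(1)] by simp
  next
    case False
    then have "i = 0 \<or> i = 1" by auto
    then show ?thesis using us(2,3) by auto
  qed
  then have "vsum us = x" by auto
  with us(1) that show ?thesis by blast
qed

lemma block_vec_atom:
  assumes d: "2 \<le> d" and t: "t \<in> block_gens c"
  shows "block_vec c t \<in> atoms (full_monoid d)"
proof -
  have "a = vzero \<or> b = vzero"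
    if ab: "a \<in> full_monoid d" "b \<in> full_monoid d" "block_vec c t = vadd a b" for a b
  proof -
    have "a i = 0 \<and> b i = 0" if "2 \<le> i" for i
      using fun_cong[OF ab(3), of i] that by (simp add: vadd_def block_vec_high)
    then have "\<forall>i\<ge>2. a i = 0" "\<forall>i\<ge>2. b i = 0" by simp_all
    then obtain as bs where as: "set as \<subseteq> block_vecs" "vsum as = a"
        and bs: "set bs \<subseteq> block_vecs" "vsum bs = b"
      using full_monoid_low_elem ab(1,2) by metis
    have "set (as @ bs) \<subseteq> block_vecs" "vsum (as @ bs) = block_vec c t"
      using as bs ab(3) by simp_all
    then obtain ts where ts: "as @ bs = map (block_vec c) ts" "set ts \<subseteq> block_gens c" "sum_list ts = t"
      using block_factorization t by blast
    then have "length (as @ bs) = 1"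
      using length_factorization_digit_gen[OF block_params(1)] t by (simp add: block_gens_def)
    then have "as = [] \<or> bs = []" by (cases as) auto
    with as bs show ?thesis by auto
  qed
  moreover have "block_vec c t \<in> block_vecs" using t unfolding block_vecs_def by blast
  ultimately show ?thesis
    using block_vecs_subset_full_monoid[OF d] block_vecs_nonzero by (auto simp: atoms_def)
qed

lemma low_atom_in_block_vecs:
  assumes d: "2 \<le> d" and u: "u \<in> atoms (full_monoid d)" "\<forall>i\<ge>2. u i = 0"
  shows "u \<in> block_vecs"
proof -
  have "u \<in> full_monoid d" using u(1) by (simp add: atoms_def)
  then obtain us where us: "set us \<subseteq> block_vecs" "vsum us = u"
    using full_monoid_low_elem u(2) by metis
  then have "set us \<subseteq> full_monoid d - {vzero}"
    using block_vecs_subset_full_monoid[OF d] block_vecs_nonzero by auto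
  then have "length us = 1"
    using length_vsum_eq_atom[OF submonoid_full_monoid u(1)] us(2) by blast
  then show ?thesis using us by (auto simp: length_Suc_conv)
qed

lemma block_target_factorization:
  assumes d: "2 \<le> d" and s: "s \<in> block_set c"
  obtains us where "set us \<subseteq> atoms (full_monoid d)" "vsum us = block_vec c (block_target c)"
    "length us = s"
proof -
  obtain ts where ts: "set ts \<subseteq> block_gens c" "sum_list ts = block_target c" "length ts = s"
    using exists_factorization_digit_target[OF block_params(1) s]
    by (auto simp: block_gens_def block_target_def)
  have "set (map (block_vec c) ts) \<subseteq> atoms (full_monoid d)" using ts(1) block_vec_atom[OF d] by auto
  moreover have "vsum (map (block_vec c) ts) = block_vec c (block_target c)"
    using ts(2) by (simp add: vsum_map_block_vec)
  ultimately show ?thesis using ts(3) that[of "map (block_vec c) ts"] by simp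
qed

lemma length_factorization_block_target:
  assumes d: "2 \<le> d"
    and us: "set us \<subseteq> atoms (full_monoid d)" "vsum us = block_vec c (block_target c)"
  shows "length us \<in> block_set c"
proof -
  have "u i = 0" if "u \<in> set us" "2 \<le> i" for u i
    using member_le_sum_list[of "u i" "map (\<lambda>u. u i) us"] fun_cong[OF us(2), of i] that
    by (simp add: vsum_def block_vec_high)
  then have "set us \<subseteq> block_vecs" using low_atom_in_block_vecs[OF d] us(1) by blast
  then obtain ts where "us = map (block_vec c) ts" "set ts \<subseteq> block_gens c" "sum_list ts = block_target c"
    using block_factorization us(2) by blast
  then show ?thesis
    using length_factorization_digit_target[OF block_params(1)]
    by (simp add: block_gens_def block_target_def)
qed

lemma lengths_block_target:
  assumes d: "2 \<le> d"
  shows "block_vec c (block_target c) \<in> full_monoid d"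
    and "lengths (full_monoid d) (block_vec c (block_target c)) = block_set c"
proof -
  have "block_set c \<noteq> {}" using range_block_set by (auto simp: P_fin_ge2_def)
  then obtain s where "s \<in> block_set c" by blast
  then obtain us where us: "set us \<subseteq> atoms (full_monoid d)" "vsum us = block_vec c (block_target c)"
    by (rule block_target_factorization[OF d])
  have "vsum us \<in> full_monoid d"
    using us(1) atoms_subset by (intro vsum_mem[OF submonoid_full_monoid]) blast
  with us(2) show "block_vec c (block_target c) \<in> full_monoid d" by simp
  show "lengths (full_monoid d) (block_vec c (block_target c)) = block_set c"
  proof (intro equalityI subsetI)
    fix k assume "k \<in> lengths (full_monoid d) (block_vec c (block_target c))"
    then show "k \<in> block_set c"
      unfolding lengths_def using length_factorization_block_target[OF d] by blast
  next
    fix s assume "s \<in> block_set c"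
    then obtain us where "set us \<subseteq> atoms (full_monoid d)" "vsum us = block_vec c (block_target c)"
        "length us = s"
      by (rule block_target_factorization[OF d])
    then show "s \<in> lengths (full_monoid d) (block_vec c (block_target c))"
      unfolding lengths_def by blast
  qed
qed

lemma system_of_lengths_full_monoid:
  assumes d: "2 \<le> d"
  shows "system_of_lengths (full_monoid d) = P_fin"
proof
  show "system_of_lengths (full_monoid d) \<subseteq> P_fin"
    by (rule system_of_lengths_subset_P_fin[OF submonoid_full_monoid])
  have "vzero \<in> full_monoid d" using submonoid_full_monoid by (simp add: submonoid_free_def)
  then have "{0} \<in> system_of_lengths (full_monoid d)"
    using lengths_vzero by (metis system_of_lengths_def imageI)
  moreover have "(1, 0, 0) \<in> block_gens 0" by (simp add: block_gens_def digit_gens_def plain_gens_def)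
  then have "block_vec 0 (1, 0, 0) \<in> atoms (full_monoid d)" by (rule block_vec_atom[OF d])
  then have "{1} \<in> system_of_lengths (full_monoid d)"
    using lengths_atom[OF submonoid_full_monoid] atoms_subset unfolding system_of_lengths_def by blast
  moreover have "P_fin_ge2 \<subseteq> system_of_lengths (full_monoid d)"
  proof
    fix L assume "L \<in> P_fin_ge2"
    then obtain c where "L = block_set c" using range_block_set by blast
    then show "L \<in> system_of_lengths (full_monoid d)"
      using lengths_block_target[OF d, of c] unfolding system_of_lengths_def by (metis imageI)
  qed
  ultimately show "P_fin \<subseteq> system_of_lengths (full_monoid d)" by (simp add: P_fin_split)
qed

section \<open>The rank\<close>

lemma unit_vec_in_full_monoid: "2 \<le> i \<Longrightarrow> i < d \<Longrightarrow> unit_vec i \<in> full_monoid d"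
  unfolding full_monoid_def free_elems_def
  by (auto simp: unit_vec_def vzero_def intro!: exI[of _ "[]"])

lemma exists_int_lin_indep_full_monoid:
  assumes d: "2 \<le> d"
  shows "\<exists>S\<subseteq>full_monoid d. int_lin_indep S \<and> card S = d"
proof -
  define U where "U = unit_vec ` {2..<d}"
  define v0 where "v0 = block_vec 0 (1, 0, 0)"
  define v1 where "v1 = block_vec 1 (1, 0, 0)"
  have gens: "(1, 0, 0) \<in> block_gens c" for c by (simp add: block_gens_def digit_gens_def plain_gens_def)
  have U_low: "\<forall>u\<in>U. u 0 = 0 \<and> u 1 = 0" by (auto simp: U_def unit_vec_def)
  have v0: "v0 0 \<noteq> 0" "v0 1 = 0"
    using block_vec_0_bounds(2)[OF gens[of 0]] by (simp_all add: v0_def block_vec_def del: block_base.simps)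
  have "v1 1 = v1 0" by (simp add: v1_def block_vec_def)
  then have v1: "v1 1 \<noteq> 0" using block_vec_0_bounds(2)[OF gens[of 1]] by (simp add: v1_def)
  have "int_lin_indep U" by (simp add: U_def int_lin_indep_unit_vecs)
  then have indep0: "int_lin_indep (insert v0 U)" "v0 \<notin> U"
    using int_lin_indep_insert_pivot[of U v0 0] v0 U_low by auto
  then have indep1: "int_lin_indep (insert v1 (insert v0 U))" "v1 \<notin> insert v0 U"
    using int_lin_indep_insert_pivot[of "insert v0 U" v1 1] v1 v0 U_low by auto
  have "card U = d - 2" using inj_unit_vec by (simp add: U_def card_image inj_on_subset[OF _ subset_UNIV])
  then have "card (insert v1 (insert v0 U)) = d"
    using indep0(2) indep1(2) d by (simp add: U_def)
  moreover have "v0 \<in> block_vecs" "v1 \<in> block_vecs"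
    using gens unfolding block_vecs_def v0_def v1_def by blast+
  then have "insert v1 (insert v0 U) \<subseteq> full_monoid d"
    using block_vecs_subset_full_monoid[OF d] unit_vec_in_full_monoid by (auto simp: U_def)
  ultimately show ?thesis using indep1(1) by blast
qed

lemma has_rank_full_monoid:
  assumes "2 \<le> d"
  shows "has_rank (full_monoid d) d"
  unfolding has_rank_def
proof (intro conjI allI impI)
  show "\<exists>S\<subseteq>full_monoid d. int_lin_indep S \<and> card S = d"
    by (rule exists_int_lin_indep_full_monoid[OF assms])
  fix S assume "S \<subseteq> full_monoid d" "int_lin_indep S"
  moreover have "full_monoid d \<subseteq> free_elems d"
    using submonoid_full_monoid by (simp add: submonoid_free_def)
  ultimately show "card S \<le> d" using card_le_if_int_lin_indep by blast
qed

theorem corollary4p8: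
  fixes d :: nat
  assumes "d \<ge> 2"
  shows "\<exists>n H. submonoid_free n H \<and> has_rank H d \<and> system_of_lengths H = P_fin"
  using submonoid_full_monoid has_rank_full_monoid[OF assms] system_of_lengths_full_monoid[OF assms]
  by blast

end
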